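(* Let $N\ge2$ and let $u\in C(S^{N-1},(0,\infty))$ be nonconstant and separable in $S^{N-1}$. Then there exist $M\in O(N)$ and $h_1,h_2\in[-1,1]$ such that: (i) $h_1>h_2$; (ii) $u_M^{-1}(\max_{S^{N-1}}u_M)=\{x\in S^{N-1}:x_N\ge h_1\}$ and $u_M^{-1}(\min_{S^{N-1}}u_M)=\{x\in S^{N-1}:x_N\le h_2\}$; (iii) for every $h\in[-1,1]$, $u_M$ is constant on $\{x\in S^{N-1}:x_N=h\}$; (iv) the function $\alpha\mapsto u_M(0_{N-2},\cos\alpha,\sin\alpha)$ is nonincreasing on $[\pi/2,3\pi/2]$.
   Context: $S^{N-1}$ is the unit sphere in $\mathbb{R}^N$ centered at $0$; $O(N)$ is the orthogonal group; for $M\in O(N)$, $u_M(x):=u(M^{-1}x)$; $0_k$ denotes the zero vector in $\mathbb{R}^k$. For an open half-space $H\subset\mathbb{R}^N$, $\sigma_H$ denotes the reflection across $\partial H$. A function $u\in C(S^{N-1},\mathbb{R})$ is separable in $S^{N-1}$ if for every open half-space $H\subset\mathbb{R}^N$ with $0\in\partial H$, either $u(x)\ge u(\sigma_Hx)$ for all $x\in H\cap S^{N-1}$, or $u(x)\le u(\sigma_Hx)$ for all $x\in H\cap S^{N-1}$. *)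

theory Defs
  imports "HOL-Analysis.Analysis"
begin

text \<open>Coordinates of R^N are indexed by a finite linearly ordered type 'n;
  the N-th (last) coordinate is the largest index, the (N-1)-th is the second largest.\<close>

definition last_ix :: "'n::{finite,linorder}" where
  "last_ix = Max (UNIV :: 'n set)"

definition penult_ix :: "'n::{finite,linorder}" where
  "penult_ix = Max (UNIV - {last_ix :: 'n})"

definition reflect_hyp :: "'a::real_inner \<Rightarrow> 'a \<Rightarrow> 'a" where
  "reflect_hyp a x = x - (2 * (a \<bullet> x) / (a \<bullet> a)) *\<^sub>R a"

text \<open>Open half-spaces H with 0 on the boundary are exactly {x. a \<bullet> x > 0}, a \<noteq> 0;
  sigma_H is reflect_hyp a.\<close>
definition separable_sphere :: "('a::euclidean_space \<Rightarrow> real) \<Rightarrow> bool" where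
  "separable_sphere u \<longleftrightarrow>
     (\<forall>a::'a. a \<noteq> 0 \<longrightarrow>
        (\<forall>x\<in>sphere 0 1. a \<bullet> x > 0 \<longrightarrow> u x \<ge> u (reflect_hyp a x)) \<or>
        (\<forall>x\<in>sphere 0 1. a \<bullet> x > 0 \<longrightarrow> u x \<le> u (reflect_hyp a x)))"

definition rot_fun :: "(real^'n \<Rightarrow> real) \<Rightarrow> real^'n^'n \<Rightarrow> real^'n \<Rightarrow> real" where
  "rot_fun u M x = u (matrix_inv M *v x)"

end

theory Submission
  imports Defs
begin

(* Call d \<noteq> 0 dominant if u (\<sigma>_d x) \<le> u x on the open half-sphere d \<bullet> x > 0;
  separability says that d or -d is dominant. Let c be the first moment of u over the sphere.
  Since the reflection \<sigma>_d preserves the measure,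
  \<integral> (u x - u (\<sigma>_d x)) (x \<bullet> d) = 2 (c \<bullet> d), and the integrand is nonnegative when d is
  dominant; hence c \<bullet> d \<ge> 0 for every dominant d, and c \<noteq> 0 because for u q < u p the
  direction p - q is dominant with a strictly positive integrand near p. Consequently every d
  with c \<bullet> d > 0 is dominant. Applied to the reflection exchanging two points of the sphere
  this shows that u is monotone in the height x \<bullet> c, for distinct heights directly and for
  equal heights by continuity. After rotating c onto the last axis, the maximum and minimum
  sets are a cap and a cup, u is constant on parallels and monotone along meridians. *)

lemma inner_reflect_hyp_normal:
  "(a::'a::real_inner) \<noteq> 0 \<Longrightarrow> a \<bullet> reflect_hyp a x = - (a \<bullet> x)"
  by (simp add: reflect_hyp_def inner_diff_right)

lemma reflect_hyp_reflect_hyp [simp]: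
  "(a::'a::real_inner) \<noteq> 0 \<Longrightarrow> reflect_hyp a (reflect_hyp a x) = x"
  by (simp add: reflect_hyp_def [of a "reflect_hyp a x"] inner_reflect_hyp_normal)
     (simp add: reflect_hyp_def)

lemma reflect_hyp_adjoint: "reflect_hyp (a::'a::real_inner) x \<bullet> y = x \<bullet> reflect_hyp a y"
  by (simp add: reflect_hyp_def inner_commute algebra_simps)

lemma inner_reflect_hyp [simp]:
  "(a::'a::real_inner) \<noteq> 0 \<Longrightarrow> reflect_hyp a x \<bullet> reflect_hyp a y = x \<bullet> y"
  by (simp add: reflect_hyp_adjoint)

lemma norm_reflect_hyp [simp]: "(a::'a::real_inner) \<noteq> 0 \<Longrightarrow> norm (reflect_hyp a x) = norm x"
  by (simp add: norm_eq_sqrt_inner)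

lemma reflect_hyp_uminus [simp]: "reflect_hyp (- a) = reflect_hyp (a::'a::real_inner)"
  by (simp add: reflect_hyp_def fun_eq_iff)

lemma linear_reflect_hyp: "linear (reflect_hyp (a::'a::real_inner))"
  unfolding reflect_hyp_def
  by (intro linearI) (simp_all add: algebra_simps add_divide_distrib)

lemma orthogonal_transformation_reflect_hyp:
  "(a::'a::real_inner) \<noteq> 0 \<Longrightarrow> orthogonal_transformation (reflect_hyp a)"
  by (simp add: orthogonal_transformation_def linear_reflect_hyp)

lemma continuous_on_reflect_hyp: "continuous_on S (reflect_hyp (a::'a::euclidean_space))"
  by (intro linear_continuous_on linear_conv_bounded_linear[THEN iffD1] linear_reflect_hyp)

lemma sgn_reflect_hyp:
  "(a::'a::real_inner) \<noteq> 0 \<Longrightarrow> sgn (reflect_hyp a x) = reflect_hyp a (sgn x)"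
  by (simp add: sgn_div_norm linear_scale[OF linear_reflect_hyp])

lemma reflect_hyp_diff_unit:
  fixes x y :: "'a::real_inner"
  assumes "norm x = 1" "norm y = 1" "x \<noteq> y"
  shows "reflect_hyp (x - y) x = y"
    and "0 < (x - y) \<bullet> x"
proof -
  have "x \<bullet> x = 1" "y \<bullet> y = 1"
    using assms(1,2) by (simp_all add: dot_square_norm)
  then have "(x - y) \<bullet> (x - y) = 2 * ((x - y) \<bullet> x)"
    by (simp add: inner_diff_left inner_diff_right inner_commute)
  moreover have "0 < (x - y) \<bullet> (x - y)"
    using assms(3) by simp
  ultimately show "0 < (x - y) \<bullet> x" "reflect_hyp (x - y) x = y"
    by (simp_all add: reflect_hyp_def)
qed

definition dominates_reflection :: "('a::real_inner \<Rightarrow> real) \<Rightarrow> 'a \<Rightarrow> bool" where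
  "dominates_reflection u d \<longleftrightarrow>
     (\<forall>x\<in>sphere 0 1. 0 < d \<bullet> x \<longrightarrow> u (reflect_hyp d x) \<le> u x)"

definition dominance_axis :: "('a::real_inner \<Rightarrow> real) \<Rightarrow> 'a \<Rightarrow> bool" where
  "dominance_axis u c \<longleftrightarrow>
     c \<noteq> 0 \<and> (\<forall>d. d \<noteq> 0 \<longrightarrow> dominates_reflection u d \<longrightarrow> 0 \<le> c \<bullet> d)"

definition sphere_monotone :: "('a::real_inner \<Rightarrow> real) \<Rightarrow> 'a \<Rightarrow> bool" where
  "sphere_monotone u c \<longleftrightarrow>
     (\<forall>x\<in>sphere 0 1. \<forall>y\<in>sphere 0 1. y \<bullet> c \<le> x \<bullet> c \<longrightarrow> u y \<le> u x)"

lemma separable_sphere_dominates_reflection: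
  fixes u :: "'a::euclidean_space \<Rightarrow> real"
  assumes "separable_sphere u" "d \<noteq> 0"
  shows "dominates_reflection u d \<or> dominates_reflection u (- d)"
proof -
  have "u (reflect_hyp d x) \<le> u x"
    if le: "\<forall>x\<in>sphere 0 1. 0 < d \<bullet> x \<longrightarrow> u x \<le> u (reflect_hyp d x)"
      and x: "x \<in> sphere 0 1" "0 < - d \<bullet> x" for x
  proof -
    have "reflect_hyp d x \<in> sphere 0 1" "0 < d \<bullet> reflect_hyp d x"
      using x \<open>d \<noteq> 0\<close> by (simp_all add: inner_reflect_hyp_normal)
    with le \<open>d \<noteq> 0\<close> show ?thesis by fastforce
  qed
  with assms show ?thesis
    unfolding separable_sphere_def dominates_reflection_def by fastforce
qed

lemma dominance_axis_dominates_reflection: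
  fixes u :: "'a::euclidean_space \<Rightarrow> real"
  assumes "separable_sphere u" "dominance_axis u c" "0 < c \<bullet> d"
  shows "dominates_reflection u d"
proof -
  have "d \<noteq> 0" using assms(3) by auto
  moreover have "\<not> dominates_reflection u (- d)"
    using assms(2,3) \<open>d \<noteq> 0\<close> by (auto simp: dominance_axis_def dest: spec[of _ "- d"])
  ultimately show ?thesis
    using separable_sphere_dominates_reflection[OF assms(1)] by blast
qed

lemma dominance_axis_strict_mono:
  fixes u :: "'a::euclidean_space \<Rightarrow> real"
  assumes "separable_sphere u" "dominance_axis u c"
    and "x \<in> sphere 0 1" "y \<in> sphere 0 1" "y \<bullet> c < x \<bullet> c"
  shows "u y \<le> u x"
proof -
  have "x \<noteq> y" using assms(5) by auto
  have "0 < c \<bullet> (x - y)"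
    using assms(5) by (simp add: inner_diff_right inner_commute)
  then have "dominates_reflection u (x - y)"
    by (rule dominance_axis_dominates_reflection[OF assms(1,2)])
  then show ?thesis
    using reflect_hyp_diff_unit[of x y] assms(3,4) \<open>x \<noteq> y\<close>
    unfolding dominates_reflection_def by fastforce
qed

lemma reflect_hyp_tilted_lowers:
  fixes c d x :: "'a::real_inner"
  assumes "d \<bullet> c = 0" "c \<noteq> 0" "0 < t" "0 < (d + t *\<^sub>R c) \<bullet> x"
  shows "reflect_hyp (d + t *\<^sub>R c) x \<bullet> c < x \<bullet> c"
proof -
  let ?a = "d + t *\<^sub>R c"
  have "?a \<noteq> 0"
    using assms(4) by auto
  then have "0 < ?a \<bullet> ?a"
    by simp
  then have "0 < 2 * (?a \<bullet> x) / (?a \<bullet> ?a) * (t * (c \<bullet> c))"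
    using assms(2-4) by simp
  then show ?thesis
    using assms(1) by (simp add: reflect_hyp_def inner_diff_left inner_add_left)
qed

lemma dominance_axis_mono_equal_height:
  fixes u :: "'a::euclidean_space \<Rightarrow> real"
  assumes cont: "continuous_on (sphere 0 1) u" and sep: "separable_sphere u"
    and axis: "dominance_axis u c"
    and x: "x \<in> sphere 0 1" and y: "y \<in> sphere 0 1"
    and eq: "y \<bullet> c = x \<bullet> c" and "x \<noteq> y"
  shows "u y \<le> u x"
proof -
  define d where "d = x - y"
  have c: "c \<noteq> 0"
    using axis by (simp add: dominance_axis_def)
  have dc: "d \<bullet> c = 0" and d: "d \<noteq> 0"
    using eq \<open>x \<noteq> y\<close> by (simp_all add: d_def inner_diff_left)
  have dx: "0 < d \<bullet> x" and dy: "reflect_hyp d x = y"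
    using reflect_hyp_diff_unit[of x y] x y \<open>x \<noteq> y\<close> by (simp_all add: d_def)
  let ?F = "at_right (0::real)" and ?g = "\<lambda>t. reflect_hyp (d + t *\<^sub>R c) x"
  have "((\<lambda>t. (d + t *\<^sub>R c) \<bullet> x) \<longlongrightarrow> (d + 0 *\<^sub>R c) \<bullet> x) ?F"
    by (intro tendsto_intros)
  then have pos: "\<forall>\<^sub>F t in ?F. 0 < (d + t *\<^sub>R c) \<bullet> x"
    using dx by (simp add: order_tendstoD(1))
  have "(?g \<longlongrightarrow> reflect_hyp (d + 0 *\<^sub>R c) x) ?F"
    unfolding reflect_hyp_def using d by (intro tendsto_intros) simp
  then have lim: "(?g \<longlongrightarrow> y) ?F"
    using dy by simp
  \<comment> \<open>Tilting the mirror of the reflection exchanging x and y towards c moves the image of x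
    strictly below x in the c-direction; let the tilt tend to 0.\<close>
  have below: "\<forall>\<^sub>F t in ?F. ?g t \<in> sphere 0 1 \<and> u (?g t) \<le> u x"
    using eventually_conj[OF pos eventually_at_right_less]
  proof eventually_elim
    case (elim t)
    then have "d + t *\<^sub>R c \<noteq> 0"
      by auto
    then have "?g t \<in> sphere 0 1"
      using x by simp
    moreover have "?g t \<bullet> c < x \<bullet> c"
      using reflect_hyp_tilted_lowers[OF dc c] elim by simp
    ultimately show ?case
      using dominance_axis_strict_mono[OF sep axis x] by blast
  qed
  have "((\<lambda>t. u (?g t)) \<longlongrightarrow> u y) ?F"
    using continuous_on_tendsto_compose[OF cont lim y] below by (simp add: eventually_conj_iff)
  then show ?thesis
    using below by (intro tendsto_upperbound[where F = ?F]) (auto elim: eventually_mono)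
qed

lemma sphere_monotone_dominance_axis:
  fixes u :: "'a::euclidean_space \<Rightarrow> real"
  assumes cont: "continuous_on (sphere 0 1) u" and sep: "separable_sphere u"
    and axis: "dominance_axis u c"
  shows "sphere_monotone u c"
  unfolding sphere_monotone_def
proof (intro ballI impI)
  fix x y :: 'a
  assume x: "x \<in> sphere 0 1" and y: "y \<in> sphere 0 1" and le: "y \<bullet> c \<le> x \<bullet> c"
  consider "y \<bullet> c < x \<bullet> c" | "x = y" | "y \<bullet> c = x \<bullet> c" "x \<noteq> y"
    using le by linarith
  then show "u y \<le> u x"
    by cases (auto intro: dominance_axis_strict_mono[OF sep axis x y]
        dominance_axis_mono_equal_height[OF cont sep axis x y])
qed

lemma absolutely_integrable_continuous_compact:
  fixes f :: "'a::euclidean_space \<Rightarrow> 'b::euclidean_space"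
  assumes S: "compact S" and f: "continuous_on S f"
  shows "f absolutely_integrable_on S"
proof -
  obtain B where B: "\<And>x. x \<in> S \<Longrightarrow> norm (f x) \<le> B"
    using compact_imp_bounded[OF compact_continuous_image[OF f S]] by (auto simp: bounded_iff)
  have "S \<in> lmeasurable"
    using S by (rule lmeasurable_compact)
  then show ?thesis
    using continuous_imp_measurable_on_sets_lebesgue[OF f] B integrable_on_const
    by (intro measurable_bounded_by_integrable_imp_absolutely_integrable[where g = "\<lambda>_. B"])
       (auto simp: fmeasurableD)
qed

lemma integrable_continuous_compact:
  fixes f :: "'a::euclidean_space \<Rightarrow> 'b::euclidean_space"
  assumes "compact S" "continuous_on S f"
  shows "f integrable_on S"
  using absolutely_integrable_continuous_compact[OF assms] by (simp add: absolutely_integrable_on_def)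

lemma integral_pos_continuous:
  fixes f :: "'a::euclidean_space \<Rightarrow> real"
  assumes S: "compact S" and f: "continuous_on S f" and nonneg: "\<And>x. x \<in> S \<Longrightarrow> 0 \<le> f x"
    and ball: "ball a r \<subseteq> S" "0 < r" and pos: "0 < f a"
  shows "0 < integral S f"
proof -
  have a: "a \<in> S" using ball by auto
  obtain e where e: "0 < e" "\<And>x. x \<in> S \<Longrightarrow> dist x a < e \<Longrightarrow> dist (f x) (f a) < f a / 2"
    using f a pos unfolding continuous_on_iff by (metis half_gt_zero)
  obtain l h where box: "cbox l h \<subseteq> ball a (min r e)" "\<forall>i\<in>Basis. l \<bullet> i < h \<bullet> i"
    using open_contains_cbox[OF open_ball, of a a "min r e"] ball e
    by (metis centre_in_ball min_less_iff_conj)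
  have sub: "cbox l h \<subseteq> S"
    using box(1) ball by (meson dual_order.trans subset_ball min.cobounded1)
  have int: "f integrable_on cbox l h"
    using continuous_on_subset[OF f sub] by (rule integrable_continuous)
  have lower: "\<forall>x\<in>cbox l h. f a / 2 \<le> f x \<bullet> 1"
  proof
    fix x assume "x \<in> cbox l h"
    then have "dist (f x) (f a) < f a / 2"
      using box(1) sub by (intro e(2)) (auto simp: dist_commute)
    then show "f a / 2 \<le> f x \<bullet> 1" by (simp add: dist_real_def abs_if split: if_splits)
  qed
  have "0 < f a / 2 * measure lborel (cbox l h)"
    using pos content_pos_lt[OF box(2)] by simp
  also have "\<dots> \<le> integral (cbox l h) f"
    using integral_component_lbound[OF int, of "f a / 2" 1] lower by simp
  also have "\<dots> \<le> integral S f"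
    using nonneg sub by (intro integral_subset_le int integrable_continuous_compact[OF S f]) auto
  finally show ?thesis .
qed

lemma integral_orthogonal_transformation_invariant:
  fixes f :: "real^'m::{finite,wellorder} \<Rightarrow> real^'n"
  assumes g: "orthogonal_transformation g" and S: "g ` S = S"
    and f: "f absolutely_integrable_on S"
  shows "integral S (f \<circ> g) = integral S f"
  using integral_change_of_variables_linear[of g S f] orthogonal_transformation_det[OF g] f g S
  by (simp add: orthogonal_transformation_linear)

definition annulus :: "'a::real_normed_vector set" where
  "annulus = cball 0 1 - ball 0 (1/2)"

lemma compact_annulus: "compact (annulus :: 'a::euclidean_space set)"
  unfolding annulus_def by (intro compact_diff compact_cball open_ball)

lemma zero_notin_annulus: "x \<in> annulus \<Longrightarrow> x \<noteq> 0"
  by (auto simp: annulus_def)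

lemma orthogonal_transformation_image_annulus:
  fixes g :: "'a::euclidean_space \<Rightarrow> 'a"
  assumes "orthogonal_transformation g"
  shows "g ` annulus = annulus"
proof -
  have "g 0 = 0"
    using assms by (simp add: orthogonal_transformation_linear linear_0)
  then show ?thesis
    using assms unfolding annulus_def
    by (simp add: image_set_diff orthogonal_transformation_inj image_orthogonal_transformation_ball
        image_orthogonal_transformation_cball)
qed

lemma continuous_on_annulus_sgn:
  fixes u :: "'a::euclidean_space \<Rightarrow> real"
  assumes "continuous_on (sphere 0 1) u"
  shows "continuous_on annulus (\<lambda>x. u (sgn x))"
  by (rule continuous_on_compose2[OF assms continuous_on_sgn[OF continuous_on_id]])
     (auto simp: zero_notin_annulus norm_sgn)

lemma continuous_on_annulus_sgn_reflect_hyp: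
  fixes u :: "'a::euclidean_space \<Rightarrow> real"
  assumes u: "continuous_on (sphere 0 1) u" and d: "d \<noteq> 0"
  shows "continuous_on annulus (\<lambda>x. u (sgn (reflect_hyp d x)))"
  using orthogonal_transformation_image_annulus[OF orthogonal_transformation_reflect_hyp[OF d]]
  by (intro continuous_on_compose2[OF continuous_on_annulus_sgn[OF u] continuous_on_reflect_hyp])
     auto

text \<open>Averaging over the sphere is done with Lebesgue measure on an annulus, where the
  radial extension of u is continuous.\<close>

definition annulus_moment :: "('a::euclidean_space \<Rightarrow> real) \<Rightarrow> 'a" where
  "annulus_moment u = integral annulus (\<lambda>x. u (sgn x) *\<^sub>R x)"

lemma integral_annulus_reflected_weight:
  fixes u :: "real^'m::{finite,wellorder} \<Rightarrow> real"
  assumes u: "continuous_on (sphere 0 1) u" and d: "d \<noteq> 0"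
  shows "integral annulus (\<lambda>x. u (sgn (reflect_hyp d x)) *\<^sub>R x) = reflect_hyp d (annulus_moment u)"
proof -
  let ?\<sigma> = "reflect_hyp d" and ?f = "\<lambda>x. u (sgn x) *\<^sub>R x"
  have \<sigma>: "orthogonal_transformation ?\<sigma>"
    using d by (rule orthogonal_transformation_reflect_hyp)
  have f: "continuous_on annulus ?f"
    by (intro continuous_intros continuous_on_annulus_sgn[OF u])
  have int: "(\<lambda>x. u (sgn (?\<sigma> x)) *\<^sub>R x) integrable_on annulus"
    by (intro integrable_continuous_compact compact_annulus continuous_intros
        continuous_on_annulus_sgn_reflect_hyp[OF u d])
  have "annulus_moment u = integral annulus (?f \<circ> ?\<sigma>)"
    unfolding annulus_moment_def
    by (intro integral_orthogonal_transformation_invariant[symmetric, OF \<sigma>]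
        orthogonal_transformation_image_annulus absolutely_integrable_continuous_compact
        compact_annulus f \<sigma>)
  also have "\<dots> = integral annulus (?\<sigma> \<circ> (\<lambda>x. u (sgn (?\<sigma> x)) *\<^sub>R x))"
    using d by (simp add: o_def linear_scale[OF linear_reflect_hyp] sgn_reflect_hyp)
  also have "\<dots> = ?\<sigma> (integral annulus (\<lambda>x. u (sgn (?\<sigma> x)) *\<^sub>R x))"
    by (intro integral_linear int linear_conv_bounded_linear[THEN iffD1] linear_reflect_hyp)
  finally show ?thesis
    using d by simp
qed

lemma integral_annulus_reflection_difference:
  fixes u :: "real^'m::{finite,wellorder} \<Rightarrow> real"
  assumes u: "continuous_on (sphere 0 1) u" and d: "d \<noteq> 0"
  shows "integral annulus (\<lambda>x. (u (sgn x) - u (sgn (reflect_hyp d x))) * (x \<bullet> d))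
           = 2 * (annulus_moment u \<bullet> d)"
proof -
  let ?\<sigma> = "reflect_hyp d"
  have int: "(\<lambda>x. u (sgn x) *\<^sub>R x) integrable_on annulus"
            "(\<lambda>x. u (sgn (?\<sigma> x)) *\<^sub>R x) integrable_on annulus"
    by (intro integrable_continuous_compact compact_annulus continuous_intros
        continuous_on_annulus_sgn_reflect_hyp[OF u d] continuous_on_annulus_sgn[OF u])+
  have "integral annulus (\<lambda>x. (u (sgn x) - u (sgn (?\<sigma> x))) * (x \<bullet> d))
      = integral annulus (\<lambda>x. u (sgn x) *\<^sub>R x - u (sgn (?\<sigma> x)) *\<^sub>R x) \<bullet> d"
    using integrable_diff[OF int]
    by (subst integral_component_eq[symmetric]) (simp_all add: algebra_simps)
  also have "\<dots> = (annulus_moment u - ?\<sigma> (annulus_moment u)) \<bullet> d"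
    by (simp add: integral_diff[OF int] integral_annulus_reflected_weight[OF u d] annulus_moment_def)
  also have "\<dots> = 2 * (annulus_moment u \<bullet> d)"
    using inner_reflect_hyp_normal[OF d, of "annulus_moment u"]
    by (simp add: inner_diff_left inner_diff_right inner_commute)
  finally show ?thesis .
qed

lemma dominates_reflection_weight_nonneg:
  fixes u :: "'a::real_inner \<Rightarrow> real"
  assumes dom: "dominates_reflection u d" and d: "d \<noteq> 0" and s: "s \<in> sphere 0 1"
  shows "0 \<le> (u s - u (reflect_hyp d s)) * (d \<bullet> s)"
proof (cases "0 < d \<bullet> s")
  case True
  then show ?thesis
    using dom s by (simp add: dominates_reflection_def)
next
  case False
  have "reflect_hyp d s \<in> sphere 0 1" "0 < d \<bullet> reflect_hyp d s" if "d \<bullet> s \<noteq> 0"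
    using s d False that by (simp_all add: inner_reflect_hyp_normal)
  then have "d \<bullet> s = 0 \<or> u s \<le> u (reflect_hyp d s)"
    using dom d unfolding dominates_reflection_def by fastforce
  then show ?thesis
    using False by (auto intro: mult_nonpos_nonpos)
qed

lemma annulus_weight_nonneg:
  fixes u :: "'a::real_inner \<Rightarrow> real"
  assumes dom: "dominates_reflection u d" and d: "d \<noteq> 0" and x: "x \<noteq> 0"
  shows "0 \<le> (u (sgn x) - u (sgn (reflect_hyp d x))) * (x \<bullet> d)"
proof -
  have "x \<bullet> d = norm x * (d \<bullet> sgn x)"
    using x by (simp add: sgn_div_norm inner_commute)
  moreover have "0 \<le> (u (sgn x) - u (sgn (reflect_hyp d x))) * (d \<bullet> sgn x)"
    using dominates_reflection_weight_nonneg[OF dom d, of "sgn x"] x d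
    by (simp add: norm_sgn sgn_reflect_hyp)
  ultimately show ?thesis
    by (metis mult.left_commute mult_nonneg_nonneg norm_ge_zero)
qed

lemma annulus_moment_inner_nonneg:
  fixes u :: "real^'m::{finite,wellorder} \<Rightarrow> real"
  assumes u: "continuous_on (sphere 0 1) u" and d: "d \<noteq> 0" and dom: "dominates_reflection u d"
  shows "0 \<le> annulus_moment u \<bullet> d"
proof -
  have "0 \<le> integral annulus (\<lambda>x. (u (sgn x) - u (sgn (reflect_hyp d x))) * (x \<bullet> d))"
    by (intro integral_nonneg integrable_continuous_compact compact_annulus continuous_intros
        continuous_on_annulus_sgn continuous_on_annulus_sgn_reflect_hyp u d
        annulus_weight_nonneg[OF dom d] zero_notin_annulus)
  then show ?thesis
    using integral_annulus_reflection_difference[OF u d] by simp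
qed

lemma annulus_moment_inner_pos:
  fixes u :: "real^'m::{finite,wellorder} \<Rightarrow> real"
  assumes u: "continuous_on (sphere 0 1) u"
    and p: "p \<in> sphere 0 1" and q: "q \<in> sphere 0 1" and less: "u q < u p"
    and dom: "dominates_reflection u (p - q)"
  shows "0 < annulus_moment u \<bullet> (p - q)"
proof -
  let ?d = "p - q"
  let ?w = "\<lambda>x. (u (sgn x) - u (sgn (reflect_hyp ?d x))) * (x \<bullet> ?d)"
  have d: "?d \<noteq> 0" using less by auto
  have "0 < integral annulus ?w"
  proof (rule integral_pos_continuous[of _ _ "(3/4) *\<^sub>R p" "1/4"])
    show "continuous_on annulus ?w"
      by (intro continuous_intros continuous_on_annulus_sgn continuous_on_annulus_sgn_reflect_hyp u d)
    show "0 \<le> ?w x" if "x \<in> annulus" for x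
      using annulus_weight_nonneg[OF dom d zero_notin_annulus[OF that]] .
    show "ball ((3/4) *\<^sub>R p) (1/4) \<subseteq> annulus"
    proof
      fix y assume "y \<in> ball ((3/4) *\<^sub>R p) (1/4)"
      then have "norm (y - (3/4) *\<^sub>R p) < 1/4"
        by (simp add: dist_norm norm_minus_commute)
      moreover have "norm ((3/4) *\<^sub>R p) = 3/4"
        using p by simp
      ultimately show "y \<in> annulus"
        unfolding annulus_def using norm_triangle_ineq2[of y "(3/4) *\<^sub>R p"]
          norm_triangle_ineq3[of y "(3/4) *\<^sub>R p"] by auto
    qed
    have "reflect_hyp ?d p = q" "0 < ?d \<bullet> p"
      using reflect_hyp_diff_unit[of p q] p q d by auto
    then show "0 < ?w ((3/4) *\<^sub>R p)"
      using p q less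
      by (simp add: sgn_scaleR linear_scale[OF linear_reflect_hyp] inner_commute sgn_div_norm)
  qed (simp_all add: compact_annulus)
  then show ?thesis
    using integral_annulus_reflection_difference[OF u d] by simp
qed

lemma dominance_axis_annulus_moment:
  fixes u :: "real^'m::{finite,wellorder} \<Rightarrow> real"
  assumes u: "continuous_on (sphere 0 1) u" and sep: "separable_sphere u"
    and p: "p \<in> sphere 0 1" and q: "q \<in> sphere 0 1" and less: "u q < u p"
  shows "dominance_axis u (annulus_moment u)"
proof -
  have pq: "p \<noteq> q" using less by auto
  have "\<not> dominates_reflection u (q - p)"
    using reflect_hyp_diff_unit[of q p] p q pq less
    unfolding dominates_reflection_def by force
  then have "dominates_reflection u (p - q)"
    using separable_sphere_dominates_reflection[OF sep, of "p - q"] pq by simp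
  then have "annulus_moment u \<noteq> 0"
    using annulus_moment_inner_pos[OF u p q less] by auto
  then show ?thesis
    unfolding dominance_axis_def using annulus_moment_inner_nonneg[OF u] by blast
qed

text \<open>The change of variables formula of the library is stated for well-ordered index types.
  A finite linear order is well-ordered, but not as a class instance, so the index type is
  replaced by an isomorphic copy.\<close>

typedef ('a::"{finite,linorder}") wo_copy = "UNIV :: 'a set" by simp

instantiation wo_copy :: ("{finite,linorder}") linorder
begin
definition less_eq_wo_copy :: "'a wo_copy \<Rightarrow> 'a wo_copy \<Rightarrow> bool" where
  "x \<le> y \<longleftrightarrow> Rep_wo_copy x \<le> Rep_wo_copy y"
definition less_wo_copy :: "'a wo_copy \<Rightarrow> 'a wo_copy \<Rightarrow> bool" where
  "x < y \<longleftrightarrow> Rep_wo_copy x < Rep_wo_copy y"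
instance
  by standard (auto simp: less_eq_wo_copy_def less_wo_copy_def Rep_wo_copy_inject[symmetric])
end

instance wo_copy :: ("{finite,linorder}") finite
  by standard (metis finite_imageI finite type_definition.Abs_image type_definition_wo_copy)

instance wo_copy :: ("{finite,linorder}") wellorder
proof
  fix P :: "'a wo_copy \<Rightarrow> bool" and a
  assume step: "\<And>x. (\<And>y. y < x \<Longrightarrow> P y) \<Longrightarrow> P x"
  have "trans {(x, y :: 'a wo_copy). x < y}"
    by (auto intro: transI)
  then have "wf {(x, y :: 'a wo_copy). x < y}"
    by (intro finite_acyclic_wf) (auto simp: acyclic_def trancl_id)
  then show "P a"
    by (induction a rule: wf_induct_rule) (auto intro: step)
qed

lemma exists_sphere_monotone_wellorder:
  fixes u :: "real^'m::{finite,wellorder} \<Rightarrow> real"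
  assumes u: "continuous_on (sphere 0 1) u" and sep: "separable_sphere u"
    and p: "p \<in> sphere 0 1" and q: "q \<in> sphere 0 1" and less: "u q < u p"
  shows "\<exists>c. c \<noteq> 0 \<and> sphere_monotone u c"
proof -
  have "dominance_axis u (annulus_moment u)"
    using u sep p q less by (rule dominance_axis_annulus_moment)
  then show ?thesis
    using sphere_monotone_dominance_axis[OF u sep] by (auto simp: dominance_axis_def)
qed

lemma reflect_hyp_isometry:
  assumes "linear f" "\<And>x y. f x \<bullet> f y = x \<bullet> y"
  shows "f (reflect_hyp a x) = reflect_hyp (f a) (f x)"
  using assms by (simp add: reflect_hyp_def linear_diff linear_scale)

lemma separable_sphere_compose_isometry:
  fixes f :: "'a::euclidean_space \<Rightarrow> 'b::euclidean_space"
  assumes f: "linear f" "\<And>x y. f x \<bullet> f y = x \<bullet> y" and sep: "separable_sphere u"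
  shows "separable_sphere (u \<circ> f)"
  unfolding separable_sphere_def
proof (intro allI impI)
  fix a :: 'a assume "a \<noteq> 0"
  then have "f a \<noteq> 0"
    using f(2)[of a a] by auto
  have pull_back:
    "\<forall>x\<in>sphere 0 1. 0 < a \<bullet> x \<longrightarrow> R ((u \<circ> f) (reflect_hyp a x)) ((u \<circ> f) x)"
    if "\<forall>y\<in>sphere 0 1. 0 < f a \<bullet> y \<longrightarrow> R (u (reflect_hyp (f a) y)) (u y)" for R
  proof (intro ballI impI)
    fix x :: 'a assume "x \<in> sphere 0 1" "0 < a \<bullet> x"
    moreover have "norm (f x) = norm x"
      using f(2) by (simp add: norm_eq_sqrt_inner)
    ultimately show "R ((u \<circ> f) (reflect_hyp a x)) ((u \<circ> f) x)"
      using that[rule_format, of "f x"] by (simp add: reflect_hyp_isometry[OF f] f(2))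
  qed
  show "(\<forall>x\<in>sphere 0 1. 0 < a \<bullet> x \<longrightarrow> (u \<circ> f) (reflect_hyp a x) \<le> (u \<circ> f) x) \<or>
        (\<forall>x\<in>sphere 0 1. 0 < a \<bullet> x \<longrightarrow> (u \<circ> f) x \<le> (u \<circ> f) (reflect_hyp a x))"
    using sep \<open>f a \<noteq> 0\<close> pull_back[of "(\<le>)"] pull_back[of "\<lambda>s t. t \<le> s"]
    unfolding separable_sphere_def by blast
qed

lemma sphere_monotone_compose_isometry:
  assumes f: "surj f" "\<And>x y. f x \<bullet> f y = x \<bullet> y" and mono: "sphere_monotone (u \<circ> f) c"
  shows "sphere_monotone u (f c)"
  unfolding sphere_monotone_def
proof (intro ballI impI)
  fix x y assume "x \<in> sphere 0 1" "y \<in> sphere 0 1" "y \<bullet> f c \<le> x \<bullet> f c"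
  moreover obtain x' y' where "x = f x'" "y = f y'"
    using f(1) by (metis surjD)
  moreover have "norm (f z) = norm z" for z
    using f(2) by (simp add: norm_eq_sqrt_inner)
  ultimately show "u y \<le> u x"
    using mono f(2) by (auto simp: sphere_monotone_def)
qed

lemma surj_norm_preserving_image_sphere:
  fixes f :: "'a::real_normed_vector \<Rightarrow> 'b::real_normed_vector"
  assumes "surj f" "\<And>x. norm (f x) = norm x"
  shows "f ` sphere 0 1 = sphere 0 1"
proof
  show "f ` sphere 0 1 \<subseteq> sphere 0 1"
    using assms(2) by auto
  show "sphere 0 1 \<subseteq> f ` sphere 0 1"
  proof
    fix y :: 'b assume "y \<in> sphere 0 1"
    moreover obtain x where "y = f x"
      using assms(1) by (metis surjD)
    ultimately show "y \<in> f ` sphere 0 1"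
      using assms(2) by auto
  qed
qed

definition of_wo_copy :: "real^('n::{finite,linorder} wo_copy) \<Rightarrow> real^'n::{finite,linorder}" where
  "of_wo_copy y = (\<chi> i. y $ Abs_wo_copy i)"

lemma linear_of_wo_copy: "linear of_wo_copy"
  by (intro linearI) (simp_all add: of_wo_copy_def vec_eq_iff)

lemma bij_Abs_wo_copy: "bij Abs_wo_copy"
  by (metis Abs_wo_copy_inverse UNIV_I bij_betw_byWitness Rep_wo_copy_inverse subset_UNIV)

lemma surj_of_wo_copy: "surj of_wo_copy"
proof (rule surjI)
  show "of_wo_copy (\<chi> j. x $ Rep_wo_copy j) = x" for x :: "real^'n::{finite,linorder}"
    by (simp add: of_wo_copy_def vec_eq_iff Abs_wo_copy_inverse)
qed

lemma inner_of_wo_copy: "of_wo_copy x \<bullet> of_wo_copy y = x \<bullet> y"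
  unfolding of_wo_copy_def inner_vec_def
  using sum.reindex_bij_betw[OF bij_Abs_wo_copy, of "\<lambda>j. x $ j \<bullet> y $ j"] by simp

lemma exists_sphere_monotone:
  fixes u :: "real^'n::{finite,linorder} \<Rightarrow> real"
  assumes u: "continuous_on (sphere 0 1) u" and sep: "separable_sphere u"
    and nonconst: "\<exists>x\<in>sphere 0 1. \<exists>y\<in>sphere 0 1. u x \<noteq> u y"
  shows "\<exists>c. c \<noteq> 0 \<and> sphere_monotone u c"
proof -
  let ?f = "of_wo_copy :: real^('n wo_copy) \<Rightarrow> real^'n::{finite,linorder}"
  have norm: "norm (?f x) = norm x" for x
    by (simp add: norm_eq_sqrt_inner inner_of_wo_copy)
  have sphere: "?f ` sphere 0 1 = sphere 0 1"
    using surj_of_wo_copy norm by (rule surj_norm_preserving_image_sphere)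
  obtain p q where "p \<in> sphere 0 1" "q \<in> sphere 0 1" "(u \<circ> ?f) q < (u \<circ> ?f) p"
    using nonconst unfolding sphere[symmetric] by (auto elim: linorder_neqE)
  moreover have "continuous_on (sphere 0 1) (u \<circ> ?f)"
    unfolding o_def using linear_of_wo_copy sphere
    by (intro continuous_on_compose2[OF u linear_continuous_on]) (auto simp: linear_conv_bounded_linear)
  moreover have "separable_sphere (u \<circ> ?f)"
    using linear_of_wo_copy inner_of_wo_copy sep by (rule separable_sphere_compose_isometry)
  ultimately obtain c where "c \<noteq> 0" "sphere_monotone (u \<circ> ?f) c"
    using exists_sphere_monotone_wellorder[of "u \<circ> ?f"] by blast
  moreover have "?f c \<noteq> 0"
    using \<open>c \<noteq> 0\<close> norm[of c] by auto
  ultimately show ?thesis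
    using sphere_monotone_compose_isometry[OF surj_of_wo_copy inner_of_wo_copy] by blast
qed

lemma sphere_monotone_scaleR:
  "0 < r \<Longrightarrow> sphere_monotone u (r *\<^sub>R c) \<longleftrightarrow> sphere_monotone u c"
  by (simp add: sphere_monotone_def)

lemma matrix_inv_orthogonal:
  fixes M :: "real^'n^'n"
  assumes "orthogonal_matrix M"
  shows "matrix_inv M = transpose M"
  unfolding matrix_inv_def
proof (rule some_equality)
  fix A assume "M ** A = mat 1 \<and> A ** M = mat 1"
  then have "transpose M ** (M ** A) = transpose M"
    by (simp add: matrix_mul_rid)
  then show "A = transpose M"
    using assms by (simp add: matrix_mul_assoc orthogonal_matrix_def matrix_mul_lid)
qed (use assms in \<open>simp add: orthogonal_matrix_def\<close>)

lemma orthogonal_transformation_matrix_vector_mult: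
  "orthogonal_matrix M \<Longrightarrow> orthogonal_transformation ((*v) (M :: real^'n^'n))"
  by (simp add: orthogonal_transformation_matrix)

lemma rot_fun_orthogonal:
  "orthogonal_matrix M \<Longrightarrow> rot_fun u M = u \<circ> (*v) (transpose M)"
  by (simp add: fun_eq_iff rot_fun_def matrix_inv_orthogonal)

lemma exists_rotation_sphere_monotone_axis:
  fixes u :: "real^'n \<Rightarrow> real"
  assumes mono: "sphere_monotone u c" and c: "c \<noteq> 0"
  shows "\<exists>M. orthogonal_matrix M \<and> sphere_monotone (rot_fun u M) (axis k 1)"
proof -
  obtain A where A: "orthogonal_matrix A" "A *v axis k 1 = sgn c"
    using orthogonal_matrix_exists_basis[of "sgn c" k] c by (auto simp: norm_sgn)
  let ?M = "transpose A"
  have M: "orthogonal_matrix ?M" "orthogonal_transformation ((*v) ?M)"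
    using A(1) by (simp_all add: orthogonal_transformation_matrix_vector_mult)
  have "rot_fun u ?M \<circ> (*v) ?M = u"
    using A(1) M(1) by (simp add: rot_fun_orthogonal fun_eq_iff matrix_vector_mul_assoc
        orthogonal_matrix_def del: transpose_matrix_vector)
  then have mono_M: "sphere_monotone (rot_fun u ?M) (?M *v c)"
    using sphere_monotone_compose_isometry[OF orthogonal_transformation_surj[OF M(2)]] M(2) mono
    by (simp add: orthogonal_transformation_def)
  have "?M *v sgn c = axis k 1"
    using A by (simp flip: A(2) add: matrix_vector_mul_assoc orthogonal_matrix_def
        del: transpose_matrix_vector)
  moreover have "c = norm c *\<^sub>R sgn c"
    using c by (simp add: sgn_div_norm)
  ultimately have "?M *v c = norm c *\<^sub>R axis k 1"
    by (metis matrix_vector_mult_scaleR)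
  then have "sphere_monotone (rot_fun u ?M) (axis k 1)"
    using mono_M c by (simp add: sphere_monotone_scaleR)
  with M(1) show ?thesis
    by blast
qed

lemma nonconstant_on_image_eq:
  assumes "f ` S = g ` T" "\<exists>x\<in>T. \<exists>y\<in>T. g x \<noteq> g y"
  shows "\<exists>x\<in>S. \<exists>y\<in>S. f x \<noteq> f y"
proof -
  obtain x y where "x \<in> T" "y \<in> T" "g x \<noteq> g y"
    using assms(2) by blast
  moreover obtain x' y' where "x' \<in> S" "y' \<in> S" "g x = f x'" "g y = f y'"
    using assms(1) \<open>x \<in> T\<close> \<open>y \<in> T\<close> by (metis imageE imageI)
  ultimately show ?thesis
    by auto
qed

lemma image_sphere_rot_fun:
  assumes "orthogonal_matrix M"
  shows "rot_fun u M ` sphere 0 1 = u ` sphere 0 1"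
proof -
  have T: "orthogonal_transformation ((*v) (transpose M))"
    using assms by (simp add: orthogonal_transformation_matrix_vector_mult)
  then have "(*v) (transpose M) ` sphere 0 1 = sphere 0 1"
    using orthogonal_transformation_norm[OF T]
    by (intro surj_norm_preserving_image_sphere orthogonal_transformation_surj)
  then show ?thesis
    by (metis image_comp rot_fun_orthogonal[OF assms])
qed

lemma continuous_on_sphere_rot_fun:
  assumes M: "orthogonal_matrix M" and u: "continuous_on (sphere 0 1) u"
  shows "continuous_on (sphere 0 1) (rot_fun u M)"
proof -
  have T: "orthogonal_transformation ((*v) (transpose M))"
    using M by (simp add: orthogonal_transformation_matrix_vector_mult)
  show ?thesis
    unfolding rot_fun_orthogonal[OF M] o_def
    using orthogonal_transformation_norm[OF T]
    by (intro continuous_on_compose2[OF u] continuous_intros) auto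
qed

lemma level_set_max_eq_superlevel:
  fixes F g :: "'a::metric_space \<Rightarrow> real"
  assumes S: "compact S" and F: "continuous_on S F" and g: "continuous_on S g"
    and mono: "\<And>x y. x \<in> S \<Longrightarrow> y \<in> S \<Longrightarrow> g y \<le> g x \<Longrightarrow> F y \<le> F x"
    and m: "m \<in> F ` S" "\<And>x. x \<in> S \<Longrightarrow> F x \<le> m"
  obtains z where "z \<in> S" "F z = m" "{x\<in>S. F x = m} = {x\<in>S. g z \<le> g x}"
proof -
  let ?K = "{x\<in>S. F x = m}"
  have "compact (S \<inter> ?K)"
    using F S by (intro compact_Int_closed continuous_closed_preimage_constant compact_imp_closed)
  then have "compact ?K"
    by (simp add: Int_absorb1)
  moreover have "?K \<noteq> {}"
    using m(1) by auto
  ultimately obtain z where z: "z \<in> ?K" "\<And>x. x \<in> ?K \<Longrightarrow> g z \<le> g x"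
    using continuous_attains_inf[OF _ _ continuous_on_subset[OF g]]
    by (metis (no_types, lifting) mem_Collect_eq subsetI)
  have "?K = {x\<in>S. g z \<le> g x}"
    using z mono[of _ z] m(2) by (auto intro: antisym)
  with z show thesis
    using that by blast
qed

lemma penult_ix_neq_last_ix:
  assumes "CARD('n::{finite,linorder}) \<ge> 2"
  shows "(penult_ix::'n) \<noteq> last_ix"
proof -
  have "\<not> (UNIV :: 'n set) \<subseteq> {last_ix}"
    using card_mono[of "{last_ix::'n}" UNIV] assms by auto
  then have "UNIV - {last_ix::'n} \<noteq> {}"
    by blast
  then have "penult_ix \<in> UNIV - {last_ix::'n}"
    unfolding penult_ix_def by (intro Max_in) auto
  then show ?thesis by blast
qed

lemma norm_sin_cos_vector:
  fixes k l :: "'n::finite"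
  assumes "k \<noteq> l"
  shows "norm (\<chi> i. if i = k then sin t else if i = l then cos t else 0 :: real^'n) = 1"
proof -
  have "(\<chi> i. if i = k then sin t else if i = l then cos t else 0 :: real^'n)
      = sin t *\<^sub>R axis k 1 + cos t *\<^sub>R axis l 1"
    using assms by (simp add: vec_eq_iff axis_def)
  then show ?thesis
    using assms by (simp add: norm_eq_sqrt_inner inner_add_left inner_add_right inner_axis_axis
        sin_cos_squared_add3 add.commute)
qed

lemma sin_antimono_half_pi_three_half_pi:
  "pi/2 \<le> a \<Longrightarrow> a \<le> b \<Longrightarrow> b \<le> 3*pi/2 \<Longrightarrow> sin b \<le> sin a"
  using sin_monotone_2pi_le[of "pi - b" "pi - a"] by simp

lemma sphere_monotone_last_normal_form:
  fixes F :: "real^'n::{finite,linorder} \<Rightarrow> real"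
  assumes card: "CARD('n) \<ge> 2" and F: "continuous_on (sphere 0 1) F"
    and nonconst: "\<exists>x\<in>sphere 0 1. \<exists>y\<in>sphere 0 1. F x \<noteq> F y"
    and mono: "sphere_monotone F (axis last_ix 1)"
  shows "\<exists>h1 h2::real. h1 \<in> {-1..1} \<and> h2 \<in> {-1..1} \<and> h1 > h2 \<and>
     {x\<in>sphere 0 1. F x = (SUP y\<in>sphere 0 1. F y)} = {x\<in>sphere 0 1. x $ last_ix \<ge> h1} \<and>
     {x\<in>sphere 0 1. F x = (INF y\<in>sphere 0 1. F y)} = {x\<in>sphere 0 1. x $ last_ix \<le> h2} \<and>
     (\<forall>h\<in>{-1..1}. \<forall>x\<in>sphere 0 1. \<forall>y\<in>sphere 0 1.
        x $ last_ix = h \<and> y $ last_ix = h \<longrightarrow> F x = F y) \<and>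
     (\<forall>\<alpha> \<beta>. pi/2 \<le> \<alpha> \<and> \<alpha> \<le> \<beta> \<and> \<beta> \<le> 3*pi/2 \<longrightarrow>
        F (\<chi> i. if i = last_ix then sin \<beta> else if i = penult_ix then cos \<beta> else 0)
        \<le> F (\<chi> i. if i = last_ix then sin \<alpha> else if i = penult_ix then cos \<alpha> else 0))"
proof -
  let ?S = "sphere (0::real^'n::{finite,linorder}) 1"
    and ?g = "\<lambda>x::real^'n::{finite,linorder}. x $ last_ix"
  have S: "compact ?S" "?S \<noteq> {}" and g: "continuous_on ?S ?g"
    by (auto intro: continuous_intros)
  have mono': "F y \<le> F x" if "x \<in> ?S" "y \<in> ?S" "?g y \<le> ?g x" for x y
    using mono that by (simp add: sphere_monotone_def inner_axis)
  have coord: "?g x \<in> {-1..1}" if "x \<in> ?S" for x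
    using component_le_norm_cart[of x last_ix] that by (auto simp: abs_le_iff)
  obtain xmax xmin where xmax: "xmax \<in> ?S" "\<And>y. y \<in> ?S \<Longrightarrow> F y \<le> F xmax"
    and xmin: "xmin \<in> ?S" "\<And>y. y \<in> ?S \<Longrightarrow> F xmin \<le> F y"
    using continuous_attains_sup[OF S F] continuous_attains_inf[OF S F] by blast
  have sup: "(SUP y\<in>?S. F y) = F xmax" and inf: "(INF y\<in>?S. F y) = F xmin"
    using xmax xmin by (auto intro: cSup_eq_maximum cInf_eq_minimum)
  obtain z1 where z1: "z1 \<in> ?S" "F z1 = F xmax" "{x\<in>?S. F x = F xmax} = {x\<in>?S. ?g z1 \<le> ?g x}"
    using level_set_max_eq_superlevel[OF S(1) F g mono'] xmax by blast
  \<comment> \<open>The minimum set of F is the maximum set of -F, with the height reversed.\<close>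
  obtain z2 where z2: "z2 \<in> ?S" "- F z2 = - F xmin"
      "{x\<in>?S. - F x = - F xmin} = {x\<in>?S. - ?g z2 \<le> - ?g x}"
  proof (rule level_set_max_eq_superlevel[of ?S "\<lambda>x. - F x" "\<lambda>x. - ?g x" "- F xmin"])
    show "continuous_on ?S (\<lambda>x. - F x)" "continuous_on ?S (\<lambda>x. - ?g x)"
      using F g by (auto intro: continuous_intros)
    show "- F y \<le> - F x" if "x \<in> ?S" "y \<in> ?S" "- ?g y \<le> - ?g x" for x y
      using mono'[of y x] that by simp
  qed (use S xmin in auto)
  have "?g z2 < ?g z1"
  proof (rule ccontr)
    assume "\<not> ?g z2 < ?g z1"
    then have "F xmax \<le> F xmin"
      using mono'[OF z2(1) z1(1)] z1(2) z2(2) by simp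
    moreover obtain a b where "a \<in> ?S" "b \<in> ?S" "F a \<noteq> F b"
      using nonconst by blast
    ultimately show False
      using xmax(2)[of a] xmax(2)[of b] xmin(2)[of a] xmin(2)[of b] by linarith
  qed
  have min_set: "{x\<in>?S. F x = F xmin} = {x\<in>?S. ?g x \<le> ?g z2}"
    using z2(3) by simp
  have level: "F x = F y" if "x \<in> ?S" "y \<in> ?S" "?g x = ?g y" for x y
    using mono'[of x y] mono'[of y x] that by simp
  have circle: "(\<chi> i. if i = last_ix then sin t else if i = penult_ix then cos t else 0) \<in> ?S"
    for t
    using penult_ix_neq_last_ix[OF card] by (simp add: norm_sin_cos_vector)
  show ?thesis
  proof (rule exI[of _ "?g z1"], rule exI[of _ "?g z2"], intro conjI allI impI)
    show "?g z1 \<in> {-1..1}" "?g z2 \<in> {-1..1}"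
      using coord[OF z1(1)] coord[OF z2(1)] by simp_all
    show "{x\<in>?S. F x = (SUP y\<in>?S. F y)} = {x\<in>?S. ?g z1 \<le> ?g x}"
      using z1(3) sup by simp
    show "{x\<in>?S. F x = (INF y\<in>?S. F y)} = {x\<in>?S. ?g x \<le> ?g z2}"
      using min_set inf by simp
    show "?g z2 < ?g z1"
      by fact
    show "\<forall>h\<in>{-1..1}. \<forall>x\<in>?S. \<forall>y\<in>?S. ?g x = h \<and> ?g y = h \<longrightarrow> F x = F y"
      using level by (metis (no_types))
  next
    fix \<alpha> \<beta> :: real assume "pi/2 \<le> \<alpha> \<and> \<alpha> \<le> \<beta> \<and> \<beta> \<le> 3*pi/2"
    then have "sin \<beta> \<le> sin \<alpha>"
      using sin_antimono_half_pi_three_half_pi by simp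
    then show "F (\<chi> i. if i = last_ix then sin \<beta> else if i = penult_ix then cos \<beta> else 0)
        \<le> F (\<chi> i. if i = last_ix then sin \<alpha> else if i = penult_ix then cos \<alpha> else 0)"
      using mono'[OF circle circle] by simp
  qed
qed

theorem lemma2p4:
  fixes u :: "real^'n::{finite,linorder} \<Rightarrow> real"
  assumes "CARD('n::{finite,linorder}) \<ge> 2"
    and "continuous_on (sphere 0 1) u"
    and "\<forall>x\<in>sphere 0 1. u x > 0"
    and "\<exists>x\<in>sphere 0 1. \<exists>y\<in>sphere 0 1. u x \<noteq> u y"
    and "separable_sphere u"
  shows "\<exists>M::real^'n::{finite,linorder}^'n::{finite,linorder}. \<exists>h1 h2::real.
     orthogonal_matrix M \<and> h1 \<in> {-1..1} \<and> h2 \<in> {-1..1} \<and>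
     h1 > h2 \<and>
     {x\<in>sphere 0 1. rot_fun u M x = (SUP y\<in>sphere 0 1. rot_fun u M y)}
        = {x\<in>sphere 0 1. x $ last_ix \<ge> h1} \<and>
     {x\<in>sphere 0 1. rot_fun u M x = (INF y\<in>sphere 0 1. rot_fun u M y)}
        = {x\<in>sphere 0 1. x $ last_ix \<le> h2} \<and>
     (\<forall>h\<in>{-1..1}. \<forall>x\<in>sphere 0 1. \<forall>y\<in>sphere 0 1.
        x $ last_ix = h \<and> y $ last_ix = h \<longrightarrow> rot_fun u M x = rot_fun u M y) \<and>
     (\<forall>\<alpha> \<beta>. pi/2 \<le> \<alpha> \<and> \<alpha> \<le> \<beta> \<and> \<beta> \<le> 3*pi/2 \<longrightarrow>
        rot_fun u M (\<chi> i. if i = last_ix then sin \<beta> else if i = penult_ix then cos \<beta> else 0)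
        \<le> rot_fun u M (\<chi> i. if i = last_ix then sin \<alpha> else if i = penult_ix then cos \<alpha> else 0))"
proof -
  obtain c where "c \<noteq> 0" "sphere_monotone u c"
    using exists_sphere_monotone[OF assms(2,5,4)] by blast
  then obtain M where M: "orthogonal_matrix M" "sphere_monotone (rot_fun u M) (axis last_ix 1)"
    using exists_rotation_sphere_monotone_axis by blast
  have "continuous_on (sphere 0 1) (rot_fun u M)"
    using M(1) assms(2) by (rule continuous_on_sphere_rot_fun)
  moreover have "\<exists>x\<in>sphere 0 1. \<exists>y\<in>sphere 0 1. rot_fun u M x \<noteq> rot_fun u M y"
    using image_sphere_rot_fun[OF M(1)] assms(4) by (rule nonconstant_on_image_eq)
  ultimately show ?thesis
    using sphere_monotone_last_normal_form[OF assms(1) _ _ M(2)] M(1) by blast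
qed

end
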